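(* Let $G$ be a graph with edge weights $w(e)\ge 1$, let $\alpha>1$ and $r\in[0,1)$, and let levels, rounded weights $w_r$, level matchings $M_l$, the combined matching $\hat{M}$ and the sets $\mathcal{R}(e)$ be as defined below. Then for every $e\in\hat{M}$, $$\Phi(e)\le\frac{\alpha+1}{\alpha-1}\,w_r(e),$$ where $\Phi(e)=\sum_{e'\in\mathcal{R}(e)}w_r(e')$.
   Context: An edge $e$ is assigned to level $l\in\mathbb{Z}$ if $w(e)\in[\alpha^{l+r},\alpha^{l+r+1})$, and its rounded weight is $w_r(e)=\alpha^{l+r}$. For each level $l$, $M_l$ is a matching consisting of edges of level $l$. The combined matching $\hat{M}$ is produced by the greedy process: start with $\hat{M}=\emptyset$; for $l$ from the maximum level down to the minimum level, add all (remaining) edges of $M_l$ to $\hat{M}$, and for each $(u,v)\in M_l$ remove all edges incident to $u$ or $v$ from every $M_{l'}$ with $l'<l$. For $e=(u,v)\in\hat{M}$ lying on level $l$, $\mathcal{R}(e)=\{e\}\cup\{(x,y)\in M_{l'}: l'<l,\ \{x,y\}\cap\{u,v\}\neq\emptyset\}$ (here $M_{l'}$ refers to the level matchings before removals). *)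

theory Defs
  imports Complex_Main
begin

definition graph :: "'a set set \<Rightarrow> bool" where
  "graph E \<longleftrightarrow> finite E \<and> (\<forall>e\<in>E. card e = 2)"

definition matching :: "'a set set \<Rightarrow> bool" where
  "matching M \<longleftrightarrow> (\<forall>e\<in>M. \<forall>f\<in>M. e \<noteq> f \<longrightarrow> e \<inter> f = {})"

definition level :: "real \<Rightarrow> real \<Rightarrow> ('e \<Rightarrow> real) \<Rightarrow> 'e \<Rightarrow> int" where
  "level \<alpha> r w e = (THE l::int. \<alpha> powr (real_of_int l + r) \<le> w e \<and> w e < \<alpha> powr (real_of_int l + r + 1))"

definition rounded_weight :: "real \<Rightarrow> real \<Rightarrow> ('e \<Rightarrow> real) \<Rightarrow> 'e \<Rightarrow> real" where
  "rounded_weight \<alpha> r w e = \<alpha> powr (real_of_int (level \<alpha> r w e) + r)"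

text \<open>One step of the greedy process at level l: state (Mhat, current level matchings).\<close>
definition greedy_step :: "int \<Rightarrow> 'a set set \<times> (int \<Rightarrow> 'a set set) \<Rightarrow> 'a set set \<times> (int \<Rightarrow> 'a set set)" where
  "greedy_step l st = (case st of (Mh, Ms) \<Rightarrow>
     (Mh \<union> Ms l,
      \<lambda>l'. if l' < l then {f \<in> Ms l'. \<forall>g \<in> Ms l. f \<inter> g = {}} else Ms l'))"

definition combined_matching :: "real \<Rightarrow> real \<Rightarrow> ('a set \<Rightarrow> real) \<Rightarrow> 'a set set \<Rightarrow> (int \<Rightarrow> 'a set set) \<Rightarrow> 'a set set" where
  "combined_matching \<alpha> r w E M =
     (let lv = level \<alpha> r w ` E in
      fst (fold greedy_step (rev [Min lv..Max lv]) ({}, M)))"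

definition R_set :: "real \<Rightarrow> real \<Rightarrow> ('a set \<Rightarrow> real) \<Rightarrow> (int \<Rightarrow> 'a set set) \<Rightarrow> 'a set \<Rightarrow> 'a set set" where
  "R_set \<alpha> r w M e = {e} \<union> {f. \<exists>l'. l' < level \<alpha> r w e \<and> f \<in> M l' \<and> f \<inter> e \<noteq> {}}"

definition Phi :: "real \<Rightarrow> real \<Rightarrow> ('a set \<Rightarrow> real) \<Rightarrow> (int \<Rightarrow> 'a set set) \<Rightarrow> 'a set \<Rightarrow> real" where
  "Phi \<alpha> r w M e = (\<Sum>f \<in> R_set \<alpha> r w M e. rounded_weight \<alpha> r w f)"

end

theory Submission
  imports Defs
begin

text \<open>An edge f \<in> R(e) other than e lies in some level matching M l' with l' below the
  level l of e and meets one of the two endpoints of e; a matching contains at most two such edges.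
  Their rounded weights \<alpha>^(l' + r), summed geometrically over all l' < l, give at most
  2 \<alpha>^(l + r) / (\<alpha> - 1) = 2 w_r(e) / (\<alpha> - 1), and w_r(e) + 2 w_r(e) / (\<alpha> - 1) is the bound.\<close>

lemma fold_greedy_step_subset:
  assumes "fst st \<subseteq> \<Union>(range M)" and "\<forall>l. snd st l \<subseteq> M l"
  shows "fst (fold greedy_step ls st) \<subseteq> \<Union>(range M) \<and> (\<forall>l. snd (fold greedy_step ls st) l \<subseteq> M l)"
  using assms
proof (induction ls arbitrary: st)
  case Nil
  then show ?case by simp
next
  case (Cons l ls)
  obtain Mh Ms where st: "st = (Mh, Ms)" by fastforce
  have "fst (greedy_step l st) \<subseteq> \<Union>(range M)" and "\<forall>l'. snd (greedy_step l st) l' \<subseteq> M l'"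
    using Cons.prems by (auto simp: st greedy_step_def)
  then show ?case using Cons.IH by simp
qed

lemma combined_matching_subset: "combined_matching \<alpha> r w E M \<subseteq> \<Union>(range M)"
  using fold_greedy_step_subset[of "({}, M)" M] by (simp add: combined_matching_def Let_def)

lemma matching_card_edges_meeting_le:
  assumes "matching N" and "finite e"
  shows "card {f\<in>N. f \<inter> e \<noteq> {}} \<le> card e"
proof -
  have at_most_one: "card {f\<in>N. v \<in> f} \<le> 1" for v
  proof (cases "{f\<in>N. v \<in> f} = {}")
    case False
    then obtain a where "a \<in> N" and "v \<in> a" by auto
    then have "{f\<in>N. v \<in> f} \<subseteq> {a}"
      using assms(1) unfolding matching_def by blast
    then have "card {f\<in>N. v \<in> f} \<le> card {a}" by (intro card_mono) auto
    then show ?thesis by simp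
  qed (simp only: card.empty)
  have "{f\<in>N. f \<inter> e \<noteq> {}} = (\<Union>v\<in>e. {f\<in>N. v \<in> f})" by blast
  also have "card \<dots> \<le> (\<Sum>v\<in>e. card {f\<in>N. v \<in> f})"
    by (rule card_UN_le[OF assms(2)])
  also have "\<dots> \<le> (\<Sum>v\<in>e. 1)" by (rule sum_mono) (rule at_most_one)
  finally show ?thesis by simp
qed

lemma sum_powr_interval:
  fixes \<alpha> r :: real and l :: int
  assumes "\<alpha> > 1"
  shows "(\<Sum>x\<in>{l - int k..<l}. \<alpha> powr (x + r))
     = (\<alpha> powr (l + r) - \<alpha> powr (real_of_int (l - int k) + r)) / (\<alpha> - 1)"
proof (induction k)
  case 0
  then show ?case by simp
next
  case (Suc k)
  let ?low = "\<alpha> powr (real_of_int (l - int (Suc k)) + r)"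
  have interval: "{l - int (Suc k)..<l} = insert (l - int (Suc k)) {l - int k..<l}" by auto
  have "real_of_int (l - int k) + r = (real_of_int (l - int (Suc k)) + r) + 1" by simp
  then have step: "\<alpha> powr (real_of_int (l - int k) + r) = ?low * \<alpha>"
    using assms by (simp only: powr_add) simp
  have "(\<Sum>x\<in>{l - int (Suc k)..<l}. \<alpha> powr (x + r)) = ?low + (\<Sum>x\<in>{l - int k..<l}. \<alpha> powr (x + r))"
    unfolding interval by (subst sum.insert) auto
  also have "\<dots> = (\<alpha> powr (l + r) - ?low) / (\<alpha> - 1)"
    unfolding Suc step using assms by (simp add: field_simps)
  finally show ?case .
qed

lemma sum_powr_below_le:
  fixes \<alpha> r :: real and l :: int
  assumes "\<alpha> > 1" and "finite L" and "\<forall>x\<in>L. x < l"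
  shows "(\<Sum>x\<in>L. \<alpha> powr (x + r)) \<le> \<alpha> powr (l + r) / (\<alpha> - 1)"
proof -
  obtain k where "L \<subseteq> {l - int k..<l}"
  proof (cases "L = {}")
    case False
    then have "Min L < l" and "\<forall>x\<in>L. Min L \<le> x"
      using assms(2,3) by auto
    then have "L \<subseteq> {l - int (nat (l - Min L))..<l}"
      using assms(3) by auto
    then show ?thesis by (rule that)
  qed auto
  then have "(\<Sum>x\<in>L. \<alpha> powr (x + r)) \<le> (\<Sum>x\<in>{l - int k..<l}. \<alpha> powr (x + r))"
    by (intro sum_mono2) auto
  also have "\<dots> = (\<alpha> powr (l + r) - \<alpha> powr (real_of_int (l - int k) + r)) / (\<alpha> - 1)"
    using assms(1) by (rule sum_powr_interval)
  also have "\<dots> \<le> \<alpha> powr (l + r) / (\<alpha> - 1)"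
    using assms(1) by (simp add: divide_right_mono)
  finally show ?thesis .
qed

lemma sum_rounded_weight_meeting_below_le:
  fixes \<alpha> r :: real and l :: int and M :: "int \<Rightarrow> 'a set set"
  assumes "\<alpha> > 1" and "finite E" and "finite e"
    and levels: "\<And>l. M l \<subseteq> {f \<in> E. level \<alpha> r w f = l}"
    and matchings: "\<And>l. matching (M l)"
  shows "(\<Sum>f \<in> {f. \<exists>l'. l' < l \<and> f \<in> M l' \<and> f \<inter> e \<noteq> {}}. rounded_weight \<alpha> r w f)
    \<le> card e * \<alpha> powr (l + r) / (\<alpha> - 1)"
    (is "sum ?rw ?F \<le> _")
proof -
  let ?lv = "level \<alpha> r w"
  have "?F \<subseteq> E" using levels by blast
  then have "finite ?F" using assms(2) by (rule finite_subset)
  have below: "\<forall>y\<in>?lv ` ?F. y < l" using levels by fastforce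
  have level_sum: "sum ?rw {f\<in>?F. ?lv f = y} \<le> card e * \<alpha> powr (y + r)" if "y < l" for y
  proof -
    have "{f\<in>?F. ?lv f = y} = {f\<in>M y. f \<inter> e \<noteq> {}}"
      using levels \<open>y < l\<close> by fastforce
    moreover have "?rw f = \<alpha> powr (y + r)" if "f \<in> M y" for f
      using levels that by (auto simp: rounded_weight_def)
    ultimately have "sum ?rw {f\<in>?F. ?lv f = y} = card {f\<in>M y. f \<inter> e \<noteq> {}} * \<alpha> powr (y + r)"
      by simp
    also have "\<dots> \<le> card e * \<alpha> powr (y + r)"
      using matching_card_edges_meeting_le[OF matchings assms(3)] by (intro mult_right_mono) auto
    finally show ?thesis .
  qed
  have "sum ?rw ?F = (\<Sum>y\<in>?lv ` ?F. sum ?rw {f\<in>?F. ?lv f = y})"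
    using \<open>finite ?F\<close> by (intro sum.group[symmetric]) auto
  also have "\<dots> \<le> (\<Sum>y\<in>?lv ` ?F. card e * \<alpha> powr (y + r))"
    using below level_sum by (intro sum_mono) auto
  also have "\<dots> = card e * (\<Sum>y\<in>?lv ` ?F. \<alpha> powr (y + r))"
    by (simp add: sum_distrib_left)
  also have "\<dots> \<le> card e * (\<alpha> powr (l + r) / (\<alpha> - 1))"
    using sum_powr_below_le[OF assms(1) _ below] \<open>finite ?F\<close> by (intro mult_left_mono) auto
  finally show ?thesis by simp
qed

theorem lemma6:
  fixes E :: "'a set set" and w :: "'a set \<Rightarrow> real" and \<alpha> r :: real
    and M :: "int \<Rightarrow> 'a set set"
  assumes "graph E"
    and "\<forall>e\<in>E. w e \<ge> 1"
    and "\<alpha> > 1" and "0 \<le> r" and "r < 1"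
    and "\<forall>l. M l \<subseteq> {e \<in> E. level \<alpha> r w e = l} \<and> matching (M l)"
    and "e \<in> combined_matching \<alpha> r w E M"
  shows "Phi \<alpha> r w M e \<le> (\<alpha> + 1) / (\<alpha> - 1) * rounded_weight \<alpha> r w e"
proof -
  let ?rw = "rounded_weight \<alpha> r w"
  define F where "F = {f. \<exists>l'. l' < level \<alpha> r w e \<and> f \<in> M l' \<and> f \<inter> e \<noteq> {}}"
  have levels: "M l \<subseteq> {f \<in> E. level \<alpha> r w f = l}" and matchings: "matching (M l)" for l
    using assms(6) by auto
  obtain l where "e \<in> M l" using combined_matching_subset assms(7) by blast
  then have "e \<in> E" using levels by auto
  with assms(1) have "finite E" and "card e = 2" by (auto simp: graph_def)
  then have "finite e" by (intro card_ge_0_finite) simp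
  have "finite F" using levels \<open>finite E\<close> by (auto simp: F_def intro: finite_subset)
  moreover have "e \<notin> F" using levels by (auto simp: F_def)
  ultimately have "Phi \<alpha> r w M e = ?rw e + sum ?rw F"
    by (simp add: Phi_def R_set_def F_def[symmetric])
  also have "\<dots> \<le> ?rw e + 2 * ?rw e / (\<alpha> - 1)"
    using sum_rounded_weight_meeting_below_le[OF assms(3) \<open>finite E\<close> \<open>finite e\<close> levels matchings]
    by (simp add: F_def \<open>card e = 2\<close> rounded_weight_def)
  also have "\<dots> = (\<alpha> + 1) / (\<alpha> - 1) * ?rw e"
    using assms(3) by (simp add: field_simps)
  finally show ?thesis .
qed

end
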